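(* For every 3-periodic $P_1P_2P_3$ of $\mathcal{E}$, \[\sum_{i=1}^3\frac{1}{d_{1,i}}=\frac{a^2+b^2+\delta}{ab^2},\] where $d_{1,i}=|P_i-f_1|$. Consequently the sum of distances from $f_1$ to the vertices of the focus-inversive triangle, $\sum_i |P_i^\dagger-f_1|=\rho^2\sum_i 1/d_{1,i}$, is invariant over the family.
   Context: Let $a>b>0$ and let $\mathcal{E}$ be the ellipse $x^2/a^2+y^2/b^2=1$. Set $c=\sqrt{a^2-b^2}$, $\delta=\sqrt{a^4-a^2b^2+b^4}$, and let the foci be $f_1=(-c,0)$, $f_2=(c,0)$. A 3-periodic is a triangle $P_1P_2P_3$ with vertices on $\mathcal{E}$ such that at each vertex the normal to $\mathcal{E}$ bisects the angle formed by the two sides meeting at that vertex; these form a one-parameter family (one through every point of $\mathcal{E}$). Fix $\rho>0$; the focus-inversive triangle has vertices $P_i^\dagger=f_1+(\rho/d_{1,i})^2(P_i-f_1)$. *)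

theory Defs
  imports "HOL-Analysis.Analysis"
begin

definition on_ellipse :: "real \<Rightarrow> real \<Rightarrow> real \<times> real \<Rightarrow> bool" where
  "on_ellipse a b P \<longleftrightarrow> (fst P)^2 / a^2 + (snd P)^2 / b^2 = 1"

text \<open>Normal direction to the ellipse at P (gradient of the defining function, up to factor 2).\<close>
definition ell_normal :: "real \<Rightarrow> real \<Rightarrow> real \<times> real \<Rightarrow> real \<times> real" where
  "ell_normal a b P = (fst P / a^2, snd P / b^2)"

definition cross2 :: "real \<times> real \<Rightarrow> real \<times> real \<Rightarrow> real" where
  "cross2 u v = fst u * snd v - snd u * fst v"

text \<open>The normal line at Q bisects the angle RQS: the internal bisector direction
  (sum of the unit vectors along QR and QS) is parallel to the normal at Q.\<close>
definition normal_bisects :: "real \<Rightarrow> real \<Rightarrow> real \<times> real \<Rightarrow> real \<times> real \<Rightarrow> real \<times> real \<Rightarrow> bool" where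
  "normal_bisects a b Q R S \<longleftrightarrow>
     cross2 (scaleR (1 / norm (R - Q)) (R - Q) + scaleR (1 / norm (S - Q)) (S - Q))
            (ell_normal a b Q) = 0"

definition three_periodic :: "real \<Rightarrow> real \<Rightarrow> real \<times> real \<Rightarrow> real \<times> real \<Rightarrow> real \<times> real \<Rightarrow> bool" where
  "three_periodic a b P1 P2 P3 \<longleftrightarrow>
     P1 \<noteq> P2 \<and> P2 \<noteq> P3 \<and> P1 \<noteq> P3 \<and>
     on_ellipse a b P1 \<and> on_ellipse a b P2 \<and> on_ellipse a b P3 \<and>
     normal_bisects a b P1 P2 P3 \<and> normal_bisects a b P2 P3 P1 \<and> normal_bisects a b P3 P1 P2"

definition inv_pt :: "real \<times> real \<Rightarrow> real \<Rightarrow> real \<times> real \<Rightarrow> real \<times> real" where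
  "inv_pt f \<rho> P = f + scaleR ((\<rho> / dist P f)^2) (P - f)"

end

theory Submission
  imports Defs
begin

text \<open>Write \<open>P\<^sub>k = (a cos \<theta>\<^sub>k, b sin \<theta>\<^sub>k)\<close> and \<open>u\<^sub>k = (cos \<theta>\<^sub>k, sin \<theta>\<^sub>k)\<close>.
  A chord satisfies \<open>|P\<^sub>i - P\<^sub>j|\<^sup>2 = |u\<^sub>i - u\<^sub>j|\<^sup>2 M\<^sub>i\<^sub>j\<close> with an explicit factor
  \<open>M\<^sub>i\<^sub>j\<close>, and the normal at \<open>P\<^sub>i\<close> bisects the angle iff both sides make the same angle with
  it; since \<open>(P\<^sub>j - P\<^sub>i)\<bullet>n\<^sub>i = -|u\<^sub>i - u\<^sub>j|\<^sup>2/2\<close>, this says that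
  \<open>\<kappa> = |u\<^sub>i - u\<^sub>j|\<^sup>2 / M\<^sub>i\<^sub>j\<close> is the same for all three sides. For \<open>z\<^sub>k = exp (i \<theta>\<^sub>k)\<close> these
  equations become Vieta relations \<open>\<sigma>\<^sub>1 = -q\<sigma>\<^sub>3\<close>, \<open>\<sigma>\<^sub>2 = -q\<close> with \<open>q = \<kappa>(a\<^sup>2 - b\<^sup>2)/4\<close>,
  which determine the symmetric functions of the \<open>cos \<theta>\<^sub>k\<close> up to the single unknown
  \<open>Re \<sigma>\<^sub>3\<close>, and force \<open>q\<close> to be the positive root of a quadratic involving \<open>\<delta>\<close>.
  The focal distances are \<open>a + c cos \<theta>\<^sub>k\<close>, and the sum of their reciprocals turns out
  not to depend on \<open>Re \<sigma>\<^sub>3\<close>.\<close>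

lemma bisector_parallel_imp_eq_inner:
  fixes r s n :: "real \<times> real"
  assumes r: "norm r = 1" and s: "norm s = 1"
    and parallel: "cross2 (r + s) n = 0" and nonorth: "inner (r + s) n \<noteq> 0"
  shows "inner r n = inner s n"
proof -
  obtain r1 r2 s1 s2 n1 n2 where rsn: "r = (r1, r2)" "s = (s1, s2)" "n = (n1, n2)"
    by (metis prod.collapse)
  have "r1^2 + r2^2 = 1" "s1^2 + s2^2 = 1"
    using r s by (simp_all add: rsn norm_Pair)
  \<comment> \<open>a Lagrange identity whose third term \<open>((r+s)\<bullet>(r-s))((r+s)\<bullet>n)\<close> vanishes as \<open>|r| = |s|\<close>\<close>
  then have "((r1 + s1)^2 + (r2 + s2)^2) * ((r1 - s1) * n1 + (r2 - s2) * n2)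
      = ((r1 + s1) * (r2 - s2) - (r2 + s2) * (r1 - s1)) * ((r1 + s1) * n2 - (r2 + s2) * n1)"
    by algebra
  moreover have "(r1 + s1) * n2 - (r2 + s2) * n1 = 0"
    using parallel by (simp add: rsn cross2_def)
  moreover have "(r1 + s1)^2 + (r2 + s2)^2 \<noteq> 0"
    using nonorth by (auto simp: rsn)
  ultimately have "(r1 - s1) * n1 + (r2 - s2) * n2 = 0"
    by (metis mult_eq_0_iff mult_zero_right)
  then show ?thesis
    by (simp add: rsn algebra_simps)
qed

definition circle_chord_sq :: "real \<Rightarrow> real \<Rightarrow> real \<Rightarrow> real \<Rightarrow> real" where
  "circle_chord_sq C1 S1 C2 S2 = (C1 - C2)^2 + (S1 - S2)^2"

text \<open>For unit vectors \<open>(C1 - C2)\<^sup>2 = circle_chord_sq C1 S1 C2 S2 * (1 - C1 * C2 + S1 * S2) / 2\<close>,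
  which is where this factor of the squared chord length of the ellipse comes from.\<close>

definition ellipse_chord_factor :: "real \<Rightarrow> real \<Rightarrow> real \<Rightarrow> real \<Rightarrow> real \<Rightarrow> real \<Rightarrow> real" where
  "ellipse_chord_factor a b C1 S1 C2 S2 = b^2 + (a^2 - b^2) * (1 - C1 * C2 + S1 * S2) / 2"

lemma circle_chord_sq_commute: "circle_chord_sq C2 S2 C1 S1 = circle_chord_sq C1 S1 C2 S2"
  unfolding circle_chord_sq_def by (simp add: power2_commute)

lemma ellipse_chord_factor_commute:
  "ellipse_chord_factor a b C2 S2 C1 S1 = ellipse_chord_factor a b C1 S1 C2 S2"
  unfolding ellipse_chord_factor_def by (simp add: algebra_simps)

lemma circle_chord_sq_pos:
  assumes "(C1, S1) \<noteq> (C2, S2)"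
  shows "circle_chord_sq C1 S1 C2 S2 > 0"
  using assms unfolding circle_chord_sq_def
  by (smt (verit) prod.inject power2_less_0 sum_power2_eq_zero_iff)

lemma ellipse_chord_factor_pos:
  assumes "b > 0" "a > b" "C1^2 + S1^2 = 1" "C2^2 + S2^2 = 1"
  shows "ellipse_chord_factor a b C1 S1 C2 S2 > 0"
proof -
  have "2 * (1 - C1 * C2 + S1 * S2) = (C1 - C2)^2 + (S1 + S2)^2"
    using assms(3,4) by algebra
  then have "1 - C1 * C2 + S1 * S2 \<ge> 0"
    by (smt (verit) zero_le_power2)
  moreover have "a^2 - b^2 > 0"
    using assms(1,2) by (simp add: power_strict_mono)
  ultimately show ?thesis
    unfolding ellipse_chord_factor_def using assms(1) by (simp add: add_pos_nonneg)
qed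

lemma ellipse_chord_sq:
  assumes "C1^2 + S1^2 = 1" "C2^2 + S2^2 = 1"
  shows "(norm ((a * C2, b * S2) - (a * C1, b * S1)))^2
    = circle_chord_sq C1 S1 C2 S2 * ellipse_chord_factor a b C1 S1 C2 S2"
proof -
  have "(norm ((a * C2, b * S2) - (a * C1, b * S1)))^2 = a^2 * (C2 - C1)^2 + b^2 * (S2 - S1)^2"
    by (simp add: norm_Pair power_mult_distrib right_diff_distrib[symmetric])
  also have "\<dots> = circle_chord_sq C1 S1 C2 S2 * ellipse_chord_factor a b C1 S1 C2 S2"
    using assms unfolding circle_chord_sq_def ellipse_chord_factor_def by algebra
  finally show ?thesis .
qed

lemma inner_chord_ell_normal:
  assumes "a \<noteq> 0" "b \<noteq> 0" "C1^2 + S1^2 = 1" "C2^2 + S2^2 = 1"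
  shows "inner ((a * C2, b * S2) - (a * C1, b * S1)) (ell_normal a b (a * C1, b * S1))
    = - circle_chord_sq C1 S1 C2 S2 / 2"
proof -
  have "inner ((a * C2, b * S2) - (a * C1, b * S1)) (ell_normal a b (a * C1, b * S1))
      = C1 * C2 + S1 * S2 - (C1^2 + S1^2)"
    using assms(1,2) by (simp add: ell_normal_def inner_Pair field_simps power2_eq_square)
  also have "\<dots> = - circle_chord_sq C1 S1 C2 S2 / 2"
    using assms(3,4) unfolding circle_chord_sq_def by (simp add: algebra_simps power2_eq_square)
  finally show ?thesis .
qed

lemma normal_bisects_eq_normal_components:
  fixes Q R S :: "real \<times> real"
  assumes bisects: "normal_bisects a b Q R S"
    and R: "inner (R - Q) (ell_normal a b Q) < 0" and S: "inner (S - Q) (ell_normal a b Q) < 0"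
  shows "inner (R - Q) (ell_normal a b Q) / norm (R - Q)
    = inner (S - Q) (ell_normal a b Q) / norm (S - Q)"
proof -
  define r s where "r = (1 / norm (R - Q)) *\<^sub>R (R - Q)" and "s = (1 / norm (S - Q)) *\<^sub>R (S - Q)"
  have "R \<noteq> Q" "S \<noteq> Q"
    using R S by auto
  have inner_rs: "inner r (ell_normal a b Q) = inner (R - Q) (ell_normal a b Q) / norm (R - Q)"
      "inner s (ell_normal a b Q) = inner (S - Q) (ell_normal a b Q) / norm (S - Q)"
    by (simp_all add: r_def s_def)
  show ?thesis
    unfolding inner_rs[symmetric]
  proof (rule bisector_parallel_imp_eq_inner)
    show "norm r = 1" "norm s = 1"
      using \<open>R \<noteq> Q\<close> \<open>S \<noteq> Q\<close> by (simp_all add: r_def s_def)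
    show "cross2 (r + s) (ell_normal a b Q) = 0"
      using bisects by (simp add: normal_bisects_def r_def s_def)
    have "inner r (ell_normal a b Q) < 0" "inner s (ell_normal a b Q) < 0"
      unfolding inner_rs using R S \<open>R \<noteq> Q\<close> \<open>S \<noteq> Q\<close> by (simp_all add: divide_neg_pos)
    then show "inner (r + s) (ell_normal a b Q) \<noteq> 0"
      by (simp add: inner_add_left)
  qed
qed

lemma normal_bisects_chord_ratio:
  assumes ab: "b > 0" "a > b"
    and u: "C1^2 + S1^2 = 1" "C2^2 + S2^2 = 1" "C3^2 + S3^2 = 1"
    and distinct: "(C1, S1) \<noteq> (C2, S2)" "(C1, S1) \<noteq> (C3, S3)"
    and bisects: "normal_bisects a b (a * C1, b * S1) (a * C2, b * S2) (a * C3, b * S3)"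
  shows "circle_chord_sq C1 S1 C2 S2 * ellipse_chord_factor a b C1 S1 C3 S3
    = circle_chord_sq C1 S1 C3 S3 * ellipse_chord_factor a b C1 S1 C2 S2"
proof -
  define P1 P2 P3 where "P1 = (a * C1, b * S1)" and "P2 = (a * C2, b * S2)"
    and "P3 = (a * C3, b * S3)"
  define D2 D3 M2 M3 where "D2 = circle_chord_sq C1 S1 C2 S2" and "D3 = circle_chord_sq C1 S1 C3 S3"
    and "M2 = ellipse_chord_factor a b C1 S1 C2 S2" and "M3 = ellipse_chord_factor a b C1 S1 C3 S3"
  have pos: "D2 > 0" "D3 > 0" "M2 > 0" "M3 > 0"
    using circle_chord_sq_pos[OF distinct(1)] circle_chord_sq_pos[OF distinct(2)]
      ellipse_chord_factor_pos[OF ab u(1,2)] ellipse_chord_factor_pos[OF ab u(1,3)]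
    by (simp_all add: D2_def D3_def M2_def M3_def)
  have len: "(norm (P2 - P1))^2 = D2 * M2" "(norm (P3 - P1))^2 = D3 * M3"
    using ellipse_chord_sq[OF u(1,2)] ellipse_chord_sq[OF u(1,3)]
    by (simp_all add: P1_def P2_def P3_def D2_def D3_def M2_def M3_def)
  have inner_n: "inner (P2 - P1) (ell_normal a b P1) = - D2 / 2"
      "inner (P3 - P1) (ell_normal a b P1) = - D3 / 2"
    using inner_chord_ell_normal[OF _ _ u(1,2)] inner_chord_ell_normal[OF _ _ u(1,3)] ab
    by (simp_all add: P1_def P2_def P3_def D2_def D3_def)
  then have "D2 / norm (P2 - P1) = D3 / norm (P3 - P1)"
    using normal_bisects_eq_normal_components[of a b P1 P2 P3] bisects pos
    by (simp add: P1_def P2_def P3_def)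
  moreover have "norm (P2 - P1) \<noteq> 0" "norm (P3 - P1) \<noteq> 0"
    using len pos by (metis mult_pos_pos power_zero_numeral less_irrefl)+
  ultimately have "(D2 * norm (P3 - P1))^2 = (D3 * norm (P2 - P1))^2"
    by (simp add: field_simps)
  then have "(D2 * D3) * (D2 * M3) = (D2 * D3) * (D3 * M2)"
    unfolding power_mult_distrib len by (simp add: power2_eq_square algebra_simps)
  then show ?thesis
    using pos by (simp add: D2_def D3_def M2_def M3_def)
qed

lemma three_periodic_chord_ratio:
  assumes ab: "b > 0" "a > b"
    and u: "C1^2 + S1^2 = 1" "C2^2 + S2^2 = 1" "C3^2 + S3^2 = 1"
    and periodic: "three_periodic a b (a * C1, b * S1) (a * C2, b * S2) (a * C3, b * S3)"
  obtains \<kappa> where "\<kappa> > 0"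
    "circle_chord_sq C1 S1 C2 S2 = \<kappa> * ellipse_chord_factor a b C1 S1 C2 S2"
    "circle_chord_sq C1 S1 C3 S3 = \<kappa> * ellipse_chord_factor a b C1 S1 C3 S3"
    "circle_chord_sq C2 S2 C3 S3 = \<kappa> * ellipse_chord_factor a b C2 S2 C3 S3"
proof
  have distinct: "(C1, S1) \<noteq> (C2, S2)" "(C1, S1) \<noteq> (C3, S3)" "(C2, S2) \<noteq> (C3, S3)"
    using periodic by (auto simp: three_periodic_def)
  have at_P1: "circle_chord_sq C1 S1 C2 S2 * ellipse_chord_factor a b C1 S1 C3 S3
      = circle_chord_sq C1 S1 C3 S3 * ellipse_chord_factor a b C1 S1 C2 S2"
    using periodic by (intro normal_bisects_chord_ratio[OF ab u distinct(1,2)])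
      (simp add: three_periodic_def)
  have at_P2: "circle_chord_sq C2 S2 C3 S3 * ellipse_chord_factor a b C2 S2 C1 S1
      = circle_chord_sq C2 S2 C1 S1 * ellipse_chord_factor a b C2 S2 C3 S3"
    using periodic distinct by (intro normal_bisects_chord_ratio[OF ab u(2,3,1)])
      (auto simp: three_periodic_def)
  have M12: "ellipse_chord_factor a b C1 S1 C2 S2 > 0"
    using ellipse_chord_factor_pos[OF ab u(1,2)] .
  define \<kappa> where "\<kappa> = circle_chord_sq C1 S1 C2 S2 / ellipse_chord_factor a b C1 S1 C2 S2"
  show "\<kappa> > 0"
    unfolding \<kappa>_def using circle_chord_sq_pos[OF distinct(1)] M12 by simp
  show "circle_chord_sq C1 S1 C2 S2 = \<kappa> * ellipse_chord_factor a b C1 S1 C2 S2"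
    unfolding \<kappa>_def using M12 by simp
  show "circle_chord_sq C1 S1 C3 S3 = \<kappa> * ellipse_chord_factor a b C1 S1 C3 S3"
    unfolding \<kappa>_def using M12 at_P1 by (simp add: field_simps)
  show "circle_chord_sq C2 S2 C3 S3 = \<kappa> * ellipse_chord_factor a b C2 S2 C3 S3"
    unfolding \<kappa>_def using M12 at_P2
    by (simp add: field_simps circle_chord_sq_commute ellipse_chord_factor_commute)
qed

lemma unit_triple_vieta:
  fixes z1 z2 z3 :: complex and q :: real
  assumes unit: "cmod z1 = 1" "cmod z2 = 1" "cmod z3 = 1"
    and distinct: "z1 \<noteq> z2" "z1 \<noteq> z3" "z2 \<noteq> z3"
    and at_z1: "Re (z1 * cnj z2) - Re (z1 * cnj z3) = q * (Re (z1 * z2) - Re (z1 * z3))"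
    and at_z2: "Re (z2 * cnj z1) - Re (z2 * cnj z3) = q * (Re (z2 * z1) - Re (z2 * z3))"
  shows "z1 + z2 + z3 = - q * (z1 * z2 * z3)" "z1 * z2 + z1 * z3 + z2 * z3 = - q"
proof -
  define Q where "Q = complex_of_real q"
  have inv: "z1 * cnj z1 = 1" "z2 * cnj z2 = 1" "z3 * cnj z3 = 1"
    using unit by (simp_all add: complex_mult_cnj cmod_def)
  have Re_eq: "complex_of_real (Re w) = (w + cnj w) / 2" for w
    by (simp add: complex_add_cnj)
  have to_complex: "z * cnj u + cnj z * u - (z * cnj v + cnj z * v)
      = Q * (z * u + cnj z * cnj u - (z * v + cnj z * cnj v))"
    if "Re (z * cnj u) - Re (z * cnj v) = q * (Re (z * u) - Re (z * v))" for z u v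
  proof -
    have "complex_of_real (Re (z * cnj u) - Re (z * cnj v))
        = complex_of_real (q * (Re (z * u) - Re (z * v)))"
      using that by simp
    then show ?thesis
      unfolding of_real_diff of_real_mult Re_eq complex_cnj_mult complex_cnj_cnj Q_def[symmetric]
      by algebra
  qed
  \<comment> \<open>multiplied by \<open>z1 * z2 * z3\<close>, with \<open>cnj z = 1 / z\<close>, the equation at \<open>z1\<close> factors\<close>
  have "(z2 - z3) * (z1^2 - z2 * z3 + Q * z1^2 * z2 * z3 - Q) = 0"
    using to_complex[OF at_z1] inv by algebra
  then have G1: "z1^2 - z2 * z3 + Q * z1^2 * z2 * z3 - Q = 0"
    using distinct(3) by simp
  have "(z1 - z3) * (z2^2 - z1 * z3 + Q * z2^2 * z1 * z3 - Q) = 0"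
    using to_complex[OF at_z2] inv by algebra
  then have G2: "z2^2 - z1 * z3 + Q * z2^2 * z1 * z3 - Q = 0"
    using distinct(2) by simp
  have "(z1 - z2) * (z1 + z2 + z3 + Q * (z1 * z2 * z3)) = 0"
    using G1 G2 by algebra
  then have e1: "z1 + z2 + z3 = - Q * (z1 * z2 * z3)"
    using distinct(1) by (simp add: eq_neg_iff_add_eq_0)
  then show "z1 + z2 + z3 = - q * (z1 * z2 * z3)"
    by (simp add: Q_def)
  have "z1 * z2 + z1 * z3 + z2 * z3 = - Q"
    using G1 e1 by algebra
  then show "z1 * z2 + z1 * z3 + z2 * z3 = - q"
    by (simp add: Q_def)
qed

lemma unit_triple_symmetric_functions:
  fixes z1 z2 z3 :: complex and q :: real
  assumes unit: "cmod z1 = 1" "cmod z2 = 1" "cmod z3 = 1"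
    and e1: "z1 + z2 + z3 = - q * (z1 * z2 * z3)" and e2: "z1 * z2 + z1 * z3 + z2 * z3 = - q"
  shows "Re z1 + Re z2 + Re z3 = - q * Re (z1 * z2 * z3)"
    and "4 * (Re z1 * Re z2 + Re z1 * Re z3 + Re z2 * Re z3) = q^2 - 2 * q - 3"
    and "4 * (Im z1 * Im z2 + Im z1 * Im z3 + Im z2 * Im z3) = q^2 + 2 * q - 3"
    and "4 * (Re z1 * Re z2 * Re z3) = Re (z1 * z2 * z3) * (1 + q)^2"
proof -
  have inv: "z1 * cnj z1 = 1" "z2 * cnj z2 = 1" "z3 * cnj z3 = 1"
    using unit by (simp_all add: complex_mult_cnj cmod_def)
  have e1': "cnj z1 + cnj z2 + cnj z3 = - q * (cnj z1 * cnj z2 * cnj z3)"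
    using arg_cong[OF e1, of cnj] by simp
  have e2': "cnj z1 * cnj z2 + cnj z1 * cnj z3 + cnj z2 * cnj z3 = - q"
    using arg_cong[OF e2, of cnj] by simp
  have Re_eq: "2 * complex_of_real (Re w) = w + cnj w" for w
    by (simp add: complex_add_cnj)
  have Im_eq: "2 * \<i> * complex_of_real (Im w) = w - cnj w" for w
    by (simp add: complex_diff_cnj)
  have i_squared: "\<i> * \<i> = -1"
    by simp
  note vieta = inv e1 e2 e1' e2'
  note vieta = vieta[unfolded of_real_minus]
  note Re_facts = Re_eq[of z1] Re_eq[of z2] Re_eq[of z3]
    Re_eq[of "z1 * z2 * z3", unfolded complex_cnj_mult]
  note to_complex = of_real_eq_iff[where 'a = complex, symmetric, THEN iffD2]
  note real_ops = of_real_add of_real_mult of_real_minus of_real_diff of_real_power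
    of_real_numeral of_real_1
  show "Re z1 + Re z2 + Re z3 = - q * Re (z1 * z2 * z3)"
    by (rule to_complex, unfold real_ops) (use vieta Re_facts in algebra)
  show "4 * (Re z1 * Re z2 + Re z1 * Re z3 + Re z2 * Re z3) = q^2 - 2 * q - 3"
    by (rule to_complex, unfold real_ops) (use vieta Re_facts in algebra)
  show "4 * (Im z1 * Im z2 + Im z1 * Im z3 + Im z2 * Im z3) = q^2 + 2 * q - 3"
    by (rule to_complex, unfold real_ops)
      (use vieta Im_eq[of z1] Im_eq[of z2] Im_eq[of z3] i_squared in algebra)
  show "4 * (Re z1 * Re z2 * Re z3) = Re (z1 * z2 * z3) * (1 + q)^2"
    by (rule to_complex, unfold real_ops) (use vieta Re_facts in algebra)
qed

lemma equal_chord_ratios_symmetric_functions: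
  assumes u: "C1^2 + S1^2 = 1" "C2^2 + S2^2 = 1" "C3^2 + S3^2 = 1"
    and distinct: "(C1, S1) \<noteq> (C2, S2)" "(C1, S1) \<noteq> (C3, S3)" "(C2, S2) \<noteq> (C3, S3)"
    and E12: "circle_chord_sq C1 S1 C2 S2 = \<kappa> * ellipse_chord_factor a b C1 S1 C2 S2"
    and E13: "circle_chord_sq C1 S1 C3 S3 = \<kappa> * ellipse_chord_factor a b C1 S1 C3 S3"
    and E23: "circle_chord_sq C2 S2 C3 S3 = \<kappa> * ellipse_chord_factor a b C2 S2 C3 S3"
    and q: "4 * q = \<kappa> * (a^2 - b^2)"
  obtains \<tau> where "C1 + C2 + C3 = - q * \<tau>"
    "4 * (C1 * C2 + C1 * C3 + C2 * C3) = q^2 - 2 * q - 3"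
    "4 * (C1 * C2 * C3) = \<tau> * (1 + q)^2"
    "\<kappa> * b^2 = 3 - 2 * q - q^2"
proof -
  define z1 z2 z3 where "z1 = Complex C1 S1" and "z2 = Complex C2 S2" and "z3 = Complex C3 S3"
  have unit: "cmod z1 = 1" "cmod z2 = 1" "cmod z3 = 1"
    using u by (simp_all add: z1_def z2_def z3_def cmod_def)
  have distinct': "z1 \<noteq> z2" "z1 \<noteq> z3" "z2 \<noteq> z3"
    using distinct by (simp_all add: z1_def z2_def z3_def complex_eq_iff)
  have "Re (z1 * cnj z2) - Re (z1 * cnj z3) = q * (Re (z1 * z2) - Re (z1 * z3))"
    using E12 E13 u q unfolding z1_def z2_def z3_def circle_chord_sq_def ellipse_chord_factor_def
    by simp algebra
  moreover have "Re (z2 * cnj z1) - Re (z2 * cnj z3) = q * (Re (z2 * z1) - Re (z2 * z3))"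
    using E12 E23 u q unfolding z1_def z2_def z3_def circle_chord_sq_def ellipse_chord_factor_def
    by simp algebra
  ultimately have "z1 + z2 + z3 = - q * (z1 * z2 * z3)" "z1 * z2 + z1 * z3 + z2 * z3 = - q"
    using unit_triple_vieta[OF unit distinct'] by blast+
  from unit_triple_symmetric_functions[OF unit this]
  have sym: "C1 + C2 + C3 = - q * Re (z1 * z2 * z3)"
    "4 * (C1 * C2 + C1 * C3 + C2 * C3) = q^2 - 2 * q - 3"
    "4 * (S1 * S2 + S1 * S3 + S2 * S3) = q^2 + 2 * q - 3"
    "4 * (C1 * C2 * C3) = Re (z1 * z2 * z3) * (1 + q)^2"
    by (simp_all add: z1_def z2_def z3_def)
  moreover have "\<kappa> * b^2 = 3 - 2 * q - q^2"
    using E12 E13 E23 u q sym(2,3) unfolding circle_chord_sq_def ellipse_chord_factor_def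
    by algebra
  ultimately show ?thesis
    using that by blast
qed

lemma sqrt_quartic_sq: "(sqrt (a^4 - a^2 * b^2 + b^4))^2 = a^4 - a^2 * b^2 + (b::real)^4"
proof -
  have "a^4 - a^2 * b^2 + b^4 = (a^2 - b^2)^2 + a^2 * b^2"
    by algebra
  moreover have "(a^2 - b^2)^2 + a^2 * b^2 \<ge> 0"
    by simp
  ultimately show ?thesis
    by (metis real_sqrt_pow2)
qed

lemma chord_ratio_quadratic_root:
  fixes a b \<kappa> q :: real
  assumes ab: "b > 0" "a > b" and \<kappa>: "\<kappa> > 0"
    and q: "4 * q = \<kappa> * (a^2 - b^2)" and \<kappa>_b: "\<kappa> * b^2 = 3 - 2 * q - q^2"
  shows "(a^2 - b^2) * q + a^2 + b^2 = 2 * sqrt (a^4 - a^2 * b^2 + b^4)"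
proof -
  define \<delta> where "\<delta> = sqrt (a^4 - a^2 * b^2 + b^4)"
  have \<delta>: "\<delta>^2 = a^4 - a^2 * b^2 + b^4" "\<delta> \<ge> 0"
    using sqrt_quartic_sq[of a b] by (simp_all add: \<delta>_def)
  have c2: "a^2 - b^2 > 0"
    using ab by (simp add: power_strict_mono)
  then have "q > 0"
    using q \<kappa> by (smt (verit) mult_pos_pos)
  have "((a^2 - b^2) * q + a^2 + b^2 - 2 * \<delta>) * ((a^2 - b^2) * q + a^2 + b^2 + 2 * \<delta>) = 0"
    using q \<kappa>_b \<delta>(1) by algebra
  moreover have "(a^2 - b^2) * q + a^2 + b^2 + 2 * \<delta> > 0"
    using \<open>q > 0\<close> c2 \<delta>(2) by (smt (verit) mult_pos_pos zero_le_power2)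
  ultimately show ?thesis
    unfolding \<delta>_def[symmetric] by simp
qed

lemma dist_left_focus:
  assumes ab: "b > 0" "a > b" and u: "C^2 + S^2 = 1" and c: "c = sqrt (a^2 - b^2)"
  shows "dist (a * C, b * S) (- c, 0) = a + c * C" and "a + c * C > 0"
proof -
  have "b^2 < a^2"
    using ab by (simp add: power_strict_mono)
  then have c2: "c^2 = a^2 - b^2" and "c \<ge> 0"
    using c by simp_all
  then have "c^2 < a^2"
    using ab by simp
  then have "c < a"
    by (rule power_less_imp_less_base) (use ab in simp)
  have "C^2 \<le> 1"
    using u zero_le_power2[of S] by linarith
  then have "\<bar>C\<bar> \<le> 1"
    by (simp add: abs_square_le_1)
  then have "- 1 \<le> C"
    by linarith
  then have "c * (- 1) \<le> c * C"
    using \<open>c \<ge> 0\<close> by (rule mult_left_mono)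
  then show pos: "a + c * C > 0"
    using \<open>c < a\<close> by linarith
  have "(a * C + c)^2 + (b * S)^2 = (a + c * C)^2"
    using u c2 by algebra
  then show "dist (a * C, b * S) (- c, 0) = a + c * C"
    using pos by (simp add: dist_Pair_Pair dist_real_def)
qed

lemma reciprocal_sum_from_symmetric_functions:
  fixes a b c \<delta> q \<tau> C1 C2 C3 :: real
  assumes "c^2 = a^2 - b^2" "\<delta>^2 = a^4 - a^2 * b^2 + b^4" "c^2 * q + a^2 + b^2 = 2 * \<delta>"
    and "C1 + C2 + C3 = - q * \<tau>" "4 * (C1 * C2 + C1 * C3 + C2 * C3) = q^2 - 2 * q - 3"
    and "4 * (C1 * C2 * C3) = \<tau> * (1 + q)^2"
    and nonzero: "a * b^2 \<noteq> 0" "a + c * C1 \<noteq> 0" "a + c * C2 \<noteq> 0" "a + c * C3 \<noteq> 0"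
  shows "1 / (a + c * C1) + 1 / (a + c * C2) + 1 / (a + c * C3) = (a^2 + b^2 + \<delta>) / (a * b^2)"
proof -
  define d1 d2 d3 where "d1 = a + c * C1" and "d2 = a + c * C2" and "d3 = a + c * C3"
  have "a * b^2 * (d1 * d2 + d1 * d3 + d2 * d3) = (a^2 + b^2 + \<delta>) * (d1 * d2 * d3)"
    unfolding d1_def d2_def d3_def using assms(1-6) by algebra
  moreover have "d1 \<noteq> 0" "d2 \<noteq> 0" "d3 \<noteq> 0"
    using nonzero by (simp_all add: d1_def d2_def d3_def)
  ultimately have "1 / d1 + 1 / d2 + 1 / d3 = (a^2 + b^2 + \<delta>) / (a * b^2)"
    using nonzero(1) by (simp add: field_simps)
  then show ?thesis
    by (simp add: d1_def d2_def d3_def)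
qed

lemma on_ellipse_param:
  assumes "a \<noteq> 0" "b \<noteq> 0" "on_ellipse a b P"
  obtains C S where "C^2 + S^2 = 1" "P = (a * C, b * S)"
proof
  show "(fst P / a)^2 + (snd P / b)^2 = 1"
    using assms(3) by (simp add: on_ellipse_def power_divide)
  show "P = (a * (fst P / a), b * (snd P / b))"
    using assms(1,2) by simp
qed

lemma three_periodic_focal_reciprocal_sum:
  assumes ab: "b > 0" "a > b" and periodic: "three_periodic a b P1 P2 P3"
    and c: "c = sqrt (a^2 - b^2)"
  shows "1 / dist P1 (- c, 0) + 1 / dist P2 (- c, 0) + 1 / dist P3 (- c, 0)
    = (a^2 + b^2 + sqrt (a^4 - a^2 * b^2 + b^4)) / (a * b^2)"
proof -
  have "a \<noteq> 0" "b \<noteq> 0"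
    using ab by simp_all
  then obtain C1 S1 C2 S2 C3 S3 where u: "C1^2 + S1^2 = 1" "C2^2 + S2^2 = 1" "C3^2 + S3^2 = 1"
    and P: "P1 = (a * C1, b * S1)" "P2 = (a * C2, b * S2)" "P3 = (a * C3, b * S3)"
    using periodic on_ellipse_param unfolding three_periodic_def by metis
  have distinct: "(C1, S1) \<noteq> (C2, S2)" "(C1, S1) \<noteq> (C3, S3)" "(C2, S2) \<noteq> (C3, S3)"
    using periodic by (auto simp: three_periodic_def P)
  obtain \<kappa> where "\<kappa> > 0" and E:
    "circle_chord_sq C1 S1 C2 S2 = \<kappa> * ellipse_chord_factor a b C1 S1 C2 S2"
    "circle_chord_sq C1 S1 C3 S3 = \<kappa> * ellipse_chord_factor a b C1 S1 C3 S3"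
    "circle_chord_sq C2 S2 C3 S3 = \<kappa> * ellipse_chord_factor a b C2 S2 C3 S3"
    using three_periodic_chord_ratio[OF ab u] periodic unfolding P by metis
  define q where "q = \<kappa> * (a^2 - b^2) / 4"
  then have q: "4 * q = \<kappa> * (a^2 - b^2)"
    by simp
  obtain \<tau> where sym: "C1 + C2 + C3 = - q * \<tau>"
      "4 * (C1 * C2 + C1 * C3 + C2 * C3) = q^2 - 2 * q - 3" "4 * (C1 * C2 * C3) = \<tau> * (1 + q)^2"
    and \<kappa>_b: "\<kappa> * b^2 = 3 - 2 * q - q^2"
    using equal_chord_ratios_symmetric_functions[OF u distinct E q] by blast
  have "b^2 < a^2"
    using ab by (simp add: power_strict_mono)
  then have c2: "c^2 = a^2 - b^2"
    using c by simp
  have "c^2 * q + a^2 + b^2 = 2 * sqrt (a^4 - a^2 * b^2 + b^4)"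
    using chord_ratio_quadratic_root[OF ab \<open>\<kappa> > 0\<close> q \<kappa>_b] c2 by simp
  moreover have "dist P1 (- c, 0) = a + c * C1" "dist P2 (- c, 0) = a + c * C2"
      "dist P3 (- c, 0) = a + c * C3" "a + c * C1 > 0" "a + c * C2 > 0" "a + c * C3 > 0"
    using dist_left_focus[OF ab u(1) c] dist_left_focus[OF ab u(2) c]
      dist_left_focus[OF ab u(3) c] unfolding P by simp_all
  ultimately show ?thesis
    using reciprocal_sum_from_symmetric_functions[OF c2 sqrt_quartic_sq _ sym] ab by simp
qed

text \<open>No hypothesis is needed: for \<open>P = f\<close> both sides are \<open>0\<close>, as \<open>x / 0 = 0\<close>.\<close>

lemma dist_inv_pt: "dist (inv_pt f \<rho> P) f = \<rho>^2 / dist P f"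
  by (simp add: inv_pt_def dist_norm power2_eq_square)

theorem mainTheorem6:
  fixes a b \<rho> :: real and P1 P2 P3 :: "real \<times> real"
  assumes "a > b" "b > 0" "\<rho> > 0"
    and "three_periodic a b P1 P2 P3"
  defines "c \<equiv> sqrt (a^2 - b^2)"
    and "\<delta> \<equiv> sqrt (a^4 - a^2 * b^2 + b^4)"
  defines "f1 \<equiv> (- c, 0)"
  shows "1 / dist P1 f1 + 1 / dist P2 f1 + 1 / dist P3 f1 = (a^2 + b^2 + \<delta>) / (a * b^2)
       \<and> dist (inv_pt f1 \<rho> P1) f1 + dist (inv_pt f1 \<rho> P2) f1 + dist (inv_pt f1 \<rho> P3) f1
           = \<rho>^2 * (a^2 + b^2 + \<delta>) / (a * b^2)"
proof
  show sum: "1 / dist P1 f1 + 1 / dist P2 f1 + 1 / dist P3 f1 = (a^2 + b^2 + \<delta>) / (a * b^2)"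
    unfolding f1_def \<delta>_def
    by (rule three_periodic_focal_reciprocal_sum) (use assms c_def in auto)
  have "dist (inv_pt f1 \<rho> P1) f1 + dist (inv_pt f1 \<rho> P2) f1 + dist (inv_pt f1 \<rho> P3) f1
      = \<rho>^2 * (1 / dist P1 f1 + 1 / dist P2 f1 + 1 / dist P3 f1)"
    by (simp add: dist_inv_pt distrib_left)
  then show "dist (inv_pt f1 \<rho> P1) f1 + dist (inv_pt f1 \<rho> P2) f1 + dist (inv_pt f1 \<rho> P3) f1
      = \<rho>^2 * (a^2 + b^2 + \<delta>) / (a * b^2)"
    by (simp add: sum)
qed

end
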